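(* Let $P=\mathcal E-i\theta$, with $\theta\in su(N)$, be a rank-one Hermitian projector solving the Euler–Lagrange equations of the $\mathbb CP^{N-1}$ sigma model, and let $\Phi([\theta],\lambda)\in SU(N)$ solve the associated LSP $D_\alpha\Phi=u^\alpha\Phi$, $\alpha=1,2$, where $$u^1=\frac{-2}{1+\lambda}[\theta_1,\theta],\qquad u^2=\frac{-2}{1-\lambda}[\theta_2,\theta].$$ Let $\vec w_C=\big(f(x^1)\theta^j_1+g(x^2)\theta^j_2\big)\partial/\partial\theta^j$ be the generalized vector field associated with a conformal transformation. Then: (i) the $su(N)$-valued immersion function $F=\Phi^{-1}(fu^1+gu^2)\Phi$ has tangent vectors $D_\alpha F=\Phi^{-1}(\mathrm{pr}\,\vec w_Cu^\alpha)\Phi$, $\alpha=1,2$ (i.e. $F$ is the Fokas–Gel'fand immersion function associated with the conformal symmetry); (ii) the infinitesimal deformation $(u^1,u^2,\Phi)\mapsto(u^1,u^2,\Phi)+\epsilon\big(\mathrm{pr}\,\vec w_Cu^1,\ \mathrm{pr}\,\vec w_Cu^2,\ (fu^1+gu^2)\Phi\big)$, where $(fu^1+gu^2)\Phi=\Phi F$, is a symmetry of the Euler–Lagrange equations together with the LSP.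
   Context: $\mathcal E=\mathbb I/N$. Write $\theta=\theta^je_j$ in a basis $e_j$ of $su(N)$; $\theta_1,\theta_2,\theta_{12}$ etc. denote partial derivatives in $x^1,x^2$ and $D_\alpha$ total derivatives, $\lambda$ is the spectral parameter. $P=\mathcal E-i\theta$ being a rank-one Hermitian projector means $P^2=P=P^\dagger$, $\mathrm{rank}\,P=1$. The Euler–Lagrange equations are $[\theta_{12},\theta]=0$, which is equivalent to $D_2u^1-D_1u^2+[u^1,u^2]=0$, the compatibility condition of the LSP. Two settings are considered: Minkowski space, where $x^1=x+t$, $x^2=x-t$, $u^1,u^2\in su(N)$, and $f,g$ are real functions; or Euclidean space, where $x^1=\xi$, $x^2=\bar\xi$ are complex conjugate variables, $(u^1)^\dagger=-u^2$, and $g(x^2)=\overline{f(x^1)}$. The prolongation is $\mathrm{pr}\,\vec w_C=\sum_J D_J(f\theta^j_1+g\theta^j_2)\,\partial/\partial\theta^j_J$. The deformation $(u^1,u^2,\Phi)\mapsto(u^1,u^2,\Phi)+\epsilon(A_1,A_2,\Psi)$ is a symmetry of the E–L equations together with the LSP if $D_2A_1-D_1A_2+[A_1,u^2]+[u^1,A_2]=0$ on solutions, $\Phi^{-1}\Psi\in su(N)$, and $D_\alpha\Psi=u^\alpha\Psi+A_\alpha\Phi$. *)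

theory Defs
  imports "HOL-Analysis.Analysis" "HOL-Complex_Analysis.Complex_Analysis"
begin

type_synonym 'n cmat = "complex^'n^'n"

definition cscale :: "complex \<Rightarrow> 'n::finite cmat \<Rightarrow> 'n cmat" where
  "cscale c A = (\<chi> i j. c * A$i$j)"

definition cadj :: "'n::finite cmat \<Rightarrow> 'n cmat" where
  "cadj A = (\<chi> i j. cnj (A$j$i))"

definition comm :: "'n::finite cmat \<Rightarrow> 'n cmat \<Rightarrow> 'n cmat" where
  "comm A B = A ** B - B ** A"

definition in_su :: "'n::finite cmat \<Rightarrow> bool" where
  "in_su A \<longleftrightarrow> cadj A = - A \<and> trace A = 0"

definition in_SU :: "'n::finite cmat \<Rightarrow> bool" where
  "in_SU A \<longleftrightarrow> cadj A ** A = mat 1 \<and> det A = 1"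

definition rank_one_herm_proj :: "'n::finite cmat \<Rightarrow> bool" where
  "rank_one_herm_proj P \<longleftrightarrow> P ** P = P \<and> cadj P = P \<and> rank P = 1"

definition pdx :: "(real \<times> real \<Rightarrow> 'a::real_normed_vector) \<Rightarrow> real \<times> real \<Rightarrow> 'a" where
  "pdx h p = vector_derivative (\<lambda>s. h (s, snd p)) (at (fst p))"

definition pdy :: "(real \<times> real \<Rightarrow> 'a::real_normed_vector) \<Rightarrow> real \<times> real \<Rightarrow> 'a" where
  "pdy h p = vector_derivative (\<lambda>t. h (fst p, t)) (at (snd p))"

fun iter_pd :: "bool list \<Rightarrow> (real \<times> real \<Rightarrow> 'a::real_normed_vector) \<Rightarrow> real \<times> real \<Rightarrow> 'a" where
  "iter_pd [] h = h"
| "iter_pd (b # bs) h = (if b then pdy else pdx) (iter_pd bs h)"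

definition smooth2_on :: "(real \<times> real) set \<Rightarrow> (real \<times> real \<Rightarrow> 'a::real_normed_vector) \<Rightarrow> bool" where
  "smooth2_on U h \<longleftrightarrow> (\<forall>bs. continuous_on U (iter_pd bs h) \<and>
     (\<forall>p\<in>U. (\<lambda>s. iter_pd bs h (s, snd p)) differentiable (at (fst p)) \<and>
            (\<lambda>t. iter_pd bs h (fst p, t)) differentiable (at (snd p))))"

definition smooth1_on :: "real set \<Rightarrow> (real \<Rightarrow> real) \<Rightarrow> bool" where
  "smooth1_on S f \<longleftrightarrow> (\<forall>k. \<forall>x\<in>S. ((deriv ^^ k) f) differentiable (at x))"

text \<open>Minkowski: the plane coordinates are (x^1,x^2) = (x+t,x-t)
  themselves. Euclidean: the plane coordinates are (x,y) with x^1 = xi = x + i y,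
  x^2 = conj xi, and D_1, D_2 are the Wirtinger derivatives.\<close>
datatype setting = Minkowski | Euclidean

definition D1 :: "setting \<Rightarrow> (real \<times> real \<Rightarrow> 'n::finite cmat) \<Rightarrow> real \<times> real \<Rightarrow> 'n cmat" where
  "D1 s h p = (case s of Minkowski \<Rightarrow> pdx h p
     | Euclidean \<Rightarrow> cscale (1/2) (pdx h p - cscale \<i> (pdy h p)))"

definition D2 :: "setting \<Rightarrow> (real \<times> real \<Rightarrow> 'n::finite cmat) \<Rightarrow> real \<times> real \<Rightarrow> 'n cmat" where
  "D2 s h p = (case s of Minkowski \<Rightarrow> pdy h p
     | Euclidean \<Rightarrow> cscale (1/2) (pdx h p + cscale \<i> (pdy h p)))"

definition conformal_coeffs :: "setting \<Rightarrow> (real \<times> real) set \<Rightarrow> (real \<times> real \<Rightarrow> complex)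
    \<Rightarrow> (real \<times> real \<Rightarrow> complex) \<Rightarrow> bool" where
  "conformal_coeffs s U fF gG = (case s of
     Minkowski \<Rightarrow> (\<exists>f g :: real \<Rightarrow> real. smooth1_on (fst ` U) f \<and> smooth1_on (snd ` U) g \<and>
        (\<forall>p\<in>U. fF p = complex_of_real (f (fst p)) \<and> gG p = complex_of_real (g (snd p))))
   | Euclidean \<Rightarrow> (\<exists>f :: complex \<Rightarrow> complex. f holomorphic_on {z. (Re z, Im z) \<in> U} \<and>
        (\<forall>p\<in>U. fF p = f (Complex (fst p) (snd p)) \<and> gG p = cnj (f (Complex (fst p) (snd p))))))"

definition setting_reality :: "setting \<Rightarrow> 'n::finite cmat \<Rightarrow> 'n cmat \<Rightarrow> bool" where
  "setting_reality s U1 U2 = (case s of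
     Minkowski \<Rightarrow> in_su U1 \<and> in_su U2
   | Euclidean \<Rightarrow> cadj U1 = - U2)"

definition lax_u1 :: "setting \<Rightarrow> complex \<Rightarrow> (real \<times> real \<Rightarrow> 'n::finite cmat) \<Rightarrow> real \<times> real \<Rightarrow> 'n cmat" where
  "lax_u1 s lam \<theta> p = cscale (-2 / (1 + lam)) (comm (D1 s \<theta> p) (\<theta> p))"

definition lax_u2 :: "setting \<Rightarrow> complex \<Rightarrow> (real \<times> real \<Rightarrow> 'n::finite cmat) \<Rightarrow> real \<times> real \<Rightarrow> 'n cmat" where
  "lax_u2 s lam \<theta> p = cscale (-2 / (1 - lam)) (comm (D2 s \<theta> p) (\<theta> p))"

text \<open>Characteristic Q = f theta_1 + g theta_2 of the conformal vector field, and the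
  action of its prolongation on u^1, u^2 (u^alpha depends on theta and theta_alpha only,
  so pr w_C u^alpha = (du^alpha/dtheta) Q + (du^alpha/dtheta_alpha) D_alpha Q).\<close>
definition charQ :: "setting \<Rightarrow> (real \<times> real \<Rightarrow> complex) \<Rightarrow> (real \<times> real \<Rightarrow> complex)
    \<Rightarrow> (real \<times> real \<Rightarrow> 'n::finite cmat) \<Rightarrow> real \<times> real \<Rightarrow> 'n cmat" where
  "charQ s fF gG \<theta> p = cscale (fF p) (D1 s \<theta> p) + cscale (gG p) (D2 s \<theta> p)"

definition prw_u1 :: "setting \<Rightarrow> complex \<Rightarrow> (real \<times> real \<Rightarrow> complex) \<Rightarrow> (real \<times> real \<Rightarrow> complex)
    \<Rightarrow> (real \<times> real \<Rightarrow> 'n::finite cmat) \<Rightarrow> real \<times> real \<Rightarrow> 'n cmat" where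
  "prw_u1 s lam fF gG \<theta> p = cscale (-2 / (1 + lam))
     (comm (D1 s (charQ s fF gG \<theta>) p) (\<theta> p) + comm (D1 s \<theta> p) (charQ s fF gG \<theta> p))"

definition prw_u2 :: "setting \<Rightarrow> complex \<Rightarrow> (real \<times> real \<Rightarrow> complex) \<Rightarrow> (real \<times> real \<Rightarrow> complex)
    \<Rightarrow> (real \<times> real \<Rightarrow> 'n::finite cmat) \<Rightarrow> real \<times> real \<Rightarrow> 'n cmat" where
  "prw_u2 s lam fF gG \<theta> p = cscale (-2 / (1 - lam))
     (comm (D2 s (charQ s fF gG \<theta>) p) (\<theta> p) + comm (D2 s \<theta> p) (charQ s fF gG \<theta> p))"

definition LSP_symmetry :: "setting \<Rightarrow> (real \<times> real) set
    \<Rightarrow> (real \<times> real \<Rightarrow> 'n::finite cmat) \<Rightarrow> (real \<times> real \<Rightarrow> 'n cmat) \<Rightarrow> (real \<times> real \<Rightarrow> 'n cmat)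
    \<Rightarrow> (real \<times> real \<Rightarrow> 'n cmat) \<Rightarrow> (real \<times> real \<Rightarrow> 'n cmat) \<Rightarrow> (real \<times> real \<Rightarrow> 'n cmat) \<Rightarrow> bool" where
  "LSP_symmetry s U u1 u2 \<Phi> A1 A2 \<Psi> \<longleftrightarrow>
     (\<forall>p\<in>U. D2 s A1 p - D1 s A2 p + comm (A1 p) (u2 p) + comm (u1 p) (A2 p) = 0
        \<and> in_su (matrix_inv (\<Phi> p) ** \<Psi> p)
        \<and> D1 s \<Psi> p = u1 p ** \<Psi> p + A1 p ** \<Phi> p
        \<and> D2 s \<Psi> p = u2 p ** \<Psi> p + A2 p ** \<Phi> p)"

end

theory Submission
  imports Defs
begin

text \<open>Put M = f u^1 + g u^2. Because f depends on x^1 only and g on x^2 only, a direct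
  computation shows that the prolonged conformal field acts on the Lax matrices as an infinitesimal
  gauge transformation, pr w_C u^\<alpha> = D_\<alpha> M + [M, u^\<alpha>], once the zero-curvature equation
  D_2 u^1 - D_1 u^2 + [u^1, u^2] = 0 is available; the latter is the compatibility condition of the
  LSP, i.e. the symmetry of the mixed partials of \<Phi>. Along a solution of the LSP every gauge
  generator M yields an immersion F = \<Phi>^-1 M \<Phi> with D_\<alpha> F = \<Phi>^-1 (D_\<alpha> M + [M, u^\<alpha>]) \<Phi>, and a
  deformation (D_\<alpha> M + [M, u^\<alpha>], M \<Phi>) satisfying the linearised zero-curvature and Lax
  equations (by the Jacobi identity). F takes values in su(N) because M is traceless and, by the
  reality conditions, anti-Hermitian.\<close>

section \<open>Matrix algebra\<close>

lemma cscale_add_right: "cscale c (A + B) = cscale c A + cscale c B"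
  and cscale_diff_right: "cscale c (A - B) = cscale c A - cscale c B"
  and cscale_minus_right: "cscale c (- A) = - cscale c A"
  and cscale_cscale: "cscale c (cscale d A) = cscale (c * d) A"
  and cscale_mult_left: "cscale c A ** B = cscale c (A ** B)"
  and cscale_mult_right: "A ** cscale c B = cscale c (A ** B)"
  by (simp_all add: cscale_def vec_eq_iff matrix_matrix_mult_def sum_distrib_left algebra_simps)

lemma matrix_add_rdistrib: "(B + C) ** A = B ** A + C ** A"
  and matrix_diff_ldistrib: "A ** (B - C) = A ** B - A ** C"
  and matrix_diff_rdistrib: "(B - C) ** A = B ** A - C ** A"
  and matrix_neg_left: "(- B) ** A = - (B ** A)"
  and matrix_neg_right: "A ** (- B) = - (A ** B)"
  for A B C :: "'a::ring_1^'n^'n"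
  by (simp_all add: matrix_matrix_mult_def vec_eq_iff sum.distrib[symmetric]
      sum_subtractf[symmetric] sum_negf[symmetric] algebra_simps)

lemma cscale_one [simp]: "cscale 1 A = A"
  and cscale_zero_left [simp]: "cscale 0 A = 0"
  and cscale_zero_right [simp]: "cscale c 0 = 0"
  by (simp_all add: cscale_def vec_eq_iff)

lemmas matrix_distrib = matrix_add_ldistrib matrix_add_rdistrib matrix_diff_ldistrib
  matrix_diff_rdistrib matrix_neg_left matrix_neg_right

lemma comm_add_left: "comm (A + B) C = comm A C + comm B C"
  and comm_add_right: "comm C (A + B) = comm C A + comm C B"
  and comm_cscale_left: "comm (cscale c A) B = cscale c (comm A B)"
  and comm_cscale_right: "comm A (cscale c B) = cscale c (comm A B)"
  and comm_swap: "comm B A = - comm A B"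
  by (simp_all add: comm_def matrix_distrib cscale_mult_left cscale_mult_right cscale_diff_right)

lemma comm_self [simp]: "comm A A = 0"
  by (simp add: comm_def)

lemma cadj_mult: "cadj (A ** B) = cadj B ** cadj A"
  and cadj_cadj [simp]: "cadj (cadj A) = A"
  and cadj_cscale: "cadj (cscale c A) = cscale (cnj c) (cadj A)"
  and cadj_add: "cadj (A + B) = cadj A + cadj B"
  and cadj_minus: "cadj (- A) = - cadj A"
  by (simp_all add: cadj_def cscale_def matrix_matrix_mult_def vec_eq_iff mult.commute)

lemma trace_cscale: "trace (cscale c A) = c * trace A"
  by (simp add: trace_def cscale_def sum_distrib_left)

lemma trace_comm: "trace (comm A B) = 0"
  by (simp add: comm_def trace_sub trace_mul_sym[of A B])

lemma unitary_right_inverse: "cadj A ** A = mat 1 \<Longrightarrow> A ** cadj A = mat 1"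
  using matrix_left_right_inverse by blast

lemma matrix_inv_unitary:
  assumes A: "cadj A ** A = mat 1"
  shows "matrix_inv A = cadj A"
proof -
  have "A ** cadj A = mat 1 \<and> cadj A ** A = mat 1"
    using A unitary_right_inverse by blast
  then have "A ** matrix_inv A = mat 1"
    unfolding matrix_inv_def by (rule someI[where P = "\<lambda>B. A ** B = mat 1 \<and> B ** A = mat 1", THEN conjunct1])
  then have "(cadj A ** A) ** matrix_inv A = cadj A"
    by (simp flip: matrix_mul_assoc)
  then show ?thesis
    using A by simp
qed

lemma in_su_unitary_conj:
  assumes P: "cadj P ** P = mat 1" and M: "in_su M"
  shows "in_su (cadj P ** M ** P)"
proof -
  have "cadj (cadj P ** M ** P) = - (cadj P ** M ** P)"
    using M by (simp add: in_su_def cadj_mult matrix_mul_assoc matrix_distrib)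
  moreover have "trace (cadj P ** M ** P) = trace M"
    using trace_mul_sym[of "cadj P ** M" P] unitary_right_inverse[OF P]
    by (simp add: matrix_mul_assoc)
  ultimately show ?thesis
    using M by (simp add: in_su_def)
qed

lemma scaleR_complex: "r *\<^sub>R (z::complex) = of_real r * z"
  by (simp add: scaleR_conv_of_real)

lemma bounded_bilinear_matrix_mult: "bounded_bilinear (\<lambda>A B :: 'n::finite cmat. A ** B)"
  and bounded_bilinear_comm: "bounded_bilinear (comm :: 'n cmat \<Rightarrow> 'n cmat \<Rightarrow> 'n cmat)"
  and bounded_bilinear_cscale: "bounded_bilinear (cscale :: complex \<Rightarrow> 'n cmat \<Rightarrow> 'n cmat)"
  unfolding bilinear_conv_bounded_bilinear[symmetric] bilinear_def linear_iff
  by (simp_all add: comm_def cscale_def matrix_matrix_mult_def vec_eq_iff scaleR_complex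
      sum.distrib[symmetric] sum_distrib_left algebra_simps)

lemma bounded_linear_cscale: "bounded_linear (cscale c :: 'n::finite cmat \<Rightarrow> 'n cmat)"
  by (rule bounded_bilinear.bounded_linear_right[OF bounded_bilinear_cscale])

lemma bounded_linear_cadj: "bounded_linear (cadj :: 'n::finite cmat \<Rightarrow> 'n cmat)"
  unfolding linear_conv_bounded_linear[symmetric] linear_iff
  by (simp add: cadj_def vec_eq_iff scaleR_complex)

section \<open>Partial derivatives in the plane\<close>

definition has_pdx :: "(real \<times> real \<Rightarrow> 'a::real_normed_vector) \<Rightarrow> real \<times> real \<Rightarrow> 'a \<Rightarrow> bool" where
  "has_pdx h p X \<longleftrightarrow> ((\<lambda>s. h (s, snd p)) has_vector_derivative X) (at (fst p))"

definition has_pdy :: "(real \<times> real \<Rightarrow> 'a::real_normed_vector) \<Rightarrow> real \<times> real \<Rightarrow> 'a \<Rightarrow> bool" where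
  "has_pdy h p X \<longleftrightarrow> ((\<lambda>t. h (fst p, t)) has_vector_derivative X) (at (snd p))"

definition pd_differentiable :: "(real \<times> real \<Rightarrow> 'a::real_normed_vector) \<Rightarrow> real \<times> real \<Rightarrow> bool" where
  "pd_differentiable h p \<longleftrightarrow>
     (\<lambda>s. h (s, snd p)) differentiable (at (fst p)) \<and> (\<lambda>t. h (fst p, t)) differentiable (at (snd p))"

lemma pdx_eqI: "has_pdx h p X \<Longrightarrow> pdx h p = X"
  and pdy_eqI: "has_pdy h p X \<Longrightarrow> pdy h p = X"
  unfolding has_pdx_def has_pdy_def pdx_def pdy_def by (simp_all add: vector_derivative_at)

lemma pd_differentiable_iff:
  "pd_differentiable h p \<longleftrightarrow> has_pdx h p (pdx h p) \<and> has_pdy h p (pdy h p)"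
  unfolding pd_differentiable_def has_pdx_def has_pdy_def pdx_def pdy_def
  by (simp add: vector_derivative_works)

lemma pd_differentiableI: "has_pdx h p X \<Longrightarrow> has_pdy h p Y \<Longrightarrow> pd_differentiable h p"
  unfolding pd_differentiable_def has_pdx_def has_pdy_def by (blast intro: differentiableI_vector)

lemma has_pd_linear:
  assumes "bounded_linear L"
  shows "has_pdx h p X \<Longrightarrow> has_pdx (\<lambda>q. L (h q)) p (L X)"
    and "has_pdy h p X \<Longrightarrow> has_pdy (\<lambda>q. L (h q)) p (L X)"
  using bounded_linear.has_vector_derivative[OF assms] unfolding has_pdx_def has_pdy_def by blast+

lemma has_pd_bilinear:
  "bounded_bilinear B \<Longrightarrow> has_pdx a p X \<Longrightarrow> has_pdx b p Y \<Longrightarrow>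
     has_pdx (\<lambda>q. B (a q) (b q)) p (B X (b p) + B (a p) Y)"
  "bounded_bilinear B \<Longrightarrow> has_pdy a p X \<Longrightarrow> has_pdy b p Y \<Longrightarrow>
     has_pdy (\<lambda>q. B (a q) (b q)) p (B X (b p) + B (a p) Y)"
  unfolding has_pdx_def has_pdy_def
  by (auto dest: bounded_bilinear.has_vector_derivative simp: add.commute)

lemma has_pd_add:
  "has_pdx a p X \<Longrightarrow> has_pdx b p Y \<Longrightarrow> has_pdx (\<lambda>q. a q + b q) p (X + Y)"
  "has_pdy a p X \<Longrightarrow> has_pdy b p Y \<Longrightarrow> has_pdy (\<lambda>q. a q + b q) p (X + Y)"
  unfolding has_pdx_def has_pdy_def by (simp_all add: has_vector_derivative_add)

lemma has_pd_const: "has_pdx (\<lambda>q. c) p 0" "has_pdy (\<lambda>q. c) p 0"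
  unfolding has_pdx_def has_pdy_def by simp_all

lemma pd_linear:
  assumes "bounded_linear L" "pd_differentiable a p"
  shows "pdx (\<lambda>q. L (a q)) p = L (pdx a p)" "pdy (\<lambda>q. L (a q)) p = L (pdy a p)"
    and "pd_differentiable (\<lambda>q. L (a q)) p"
proof -
  have x: "has_pdx (\<lambda>q. L (a q)) p (L (pdx a p))" and y: "has_pdy (\<lambda>q. L (a q)) p (L (pdy a p))"
    using has_pd_linear[OF assms(1)] assms(2) by (auto simp: pd_differentiable_iff)
  show "pdx (\<lambda>q. L (a q)) p = L (pdx a p)" "pdy (\<lambda>q. L (a q)) p = L (pdy a p)"
    "pd_differentiable (\<lambda>q. L (a q)) p"
    using pdx_eqI[OF x] pdy_eqI[OF y] pd_differentiableI[OF x y] .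
qed

lemma pd_bilinear:
  assumes "bounded_bilinear B" "pd_differentiable a p" "pd_differentiable b p"
  shows "pdx (\<lambda>q. B (a q) (b q)) p = B (pdx a p) (b p) + B (a p) (pdx b p)"
    and "pdy (\<lambda>q. B (a q) (b q)) p = B (pdy a p) (b p) + B (a p) (pdy b p)"
    and "pd_differentiable (\<lambda>q. B (a q) (b q)) p"
proof -
  have x: "has_pdx (\<lambda>q. B (a q) (b q)) p (B (pdx a p) (b p) + B (a p) (pdx b p))"
    and y: "has_pdy (\<lambda>q. B (a q) (b q)) p (B (pdy a p) (b p) + B (a p) (pdy b p))"
    using has_pd_bilinear[OF assms(1)] assms(2,3) by (auto simp: pd_differentiable_iff)
  show "pdx (\<lambda>q. B (a q) (b q)) p = B (pdx a p) (b p) + B (a p) (pdx b p)"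
    "pdy (\<lambda>q. B (a q) (b q)) p = B (pdy a p) (b p) + B (a p) (pdy b p)"
    "pd_differentiable (\<lambda>q. B (a q) (b q)) p"
    using pdx_eqI[OF x] pdy_eqI[OF y] pd_differentiableI[OF x y] .
qed

lemma pd_add:
  assumes "pd_differentiable a p" "pd_differentiable b p"
  shows "pdx (\<lambda>q. a q + b q) p = pdx a p + pdx b p" "pdy (\<lambda>q. a q + b q) p = pdy a p + pdy b p"
    and "pd_differentiable (\<lambda>q. a q + b q) p"
proof -
  have x: "has_pdx (\<lambda>q. a q + b q) p (pdx a p + pdx b p)"
    and y: "has_pdy (\<lambda>q. a q + b q) p (pdy a p + pdy b p)"
    using has_pd_add[of a p "pdx a p" b "pdx b p"] has_pd_add[of a p "pdy a p" b "pdy b p"] assms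
    by (auto simp: pd_differentiable_iff)
  show "pdx (\<lambda>q. a q + b q) p = pdx a p + pdx b p" "pdy (\<lambda>q. a q + b q) p = pdy a p + pdy b p"
    "pd_differentiable (\<lambda>q. a q + b q) p"
    using pdx_eqI[OF x] pdy_eqI[OF y] pd_differentiableI[OF x y] .
qed

lemma pd_const: "pdx (\<lambda>q. c) p = 0" "pdy (\<lambda>q. c) p = 0" "pd_differentiable (\<lambda>q. c) p"
  using pdx_eqI[OF has_pd_const(1)] pdy_eqI[OF has_pd_const(2)]
    pd_differentiableI[OF has_pd_const] .

lemma open_slices:
  fixes U :: "(real \<times> real) set"
  assumes "open U"
  shows "open {s. (s, y) \<in> U}" and "open {t. (x, t) \<in> U}"
proof -
  have "open ((\<lambda>s. (s, y)) -` U)" "open ((\<lambda>t. (x, t)) -` U)"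
    by (intro continuous_open_vimage assms continuous_intros)+
  then show "open {s. (s, y) \<in> U}" and "open {t. (x, t) \<in> U}"
    by (simp_all add: vimage_def)
qed

lemma has_pd_local:
  assumes U: "open U" "p \<in> U" and eq: "\<And>q. q \<in> U \<Longrightarrow> h q = k q"
  shows "has_pdx h p X \<Longrightarrow> has_pdx k p X" and "has_pdy h p Y \<Longrightarrow> has_pdy k p Y"
proof -
  show "has_pdx h p X \<Longrightarrow> has_pdx k p X"
    unfolding has_pdx_def
    by (erule has_vector_derivative_transform_within_open[OF _ open_slices(1)[OF U(1)]])
      (use U eq in auto)
  show "has_pdy h p Y \<Longrightarrow> has_pdy k p Y"
    unfolding has_pdy_def
    by (erule has_vector_derivative_transform_within_open[OF _ open_slices(2)[OF U(1)]])
      (use U eq in auto)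
qed

lemma pd_local:
  assumes U: "open U" "p \<in> U" and eq: "\<And>q. q \<in> U \<Longrightarrow> h q = k q"
  shows "pdx h p = pdx k p" "pdy h p = pdy k p"
    and "pd_differentiable h p \<Longrightarrow> pd_differentiable k p"
proof -
  have "\<forall>\<^sub>F s in nhds (fst p). h (s, snd p) = k (s, snd p)"
    unfolding eventually_nhds
    by (rule exI[where x = "{s. (s, snd p) \<in> U}"]) (use U eq open_slices(1)[OF U(1)] in auto)
  then show x: "pdx h p = pdx k p"
    unfolding pdx_def by (intro vector_derivative_cong_eq[where A = UNIV]) auto
  have "\<forall>\<^sub>F t in nhds (snd p). h (fst p, t) = k (fst p, t)"
    unfolding eventually_nhds
    by (rule exI[where x = "{t. (fst p, t) \<in> U}"]) (use U eq open_slices(2)[OF U(1)] in auto)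
  then show y: "pdy h p = pdy k p"
    unfolding pdy_def by (intro vector_derivative_cong_eq[where A = UNIV]) auto
  show "pd_differentiable h p \<Longrightarrow> pd_differentiable k p"
    using has_pd_local[OF assms] by (simp add: pd_differentiable_iff x y)
qed

lemma second_difference_mvt:
  fixes g gx gxy :: "real \<times> real \<Rightarrow> real"
  assumes r: "r > 0"
    and dx: "\<And>x y. a \<le> x \<Longrightarrow> x \<le> a + r \<Longrightarrow> b \<le> y \<Longrightarrow> y \<le> b + r \<Longrightarrow>
               ((\<lambda>s. g (s, y)) has_real_derivative gx (x, y)) (at x)"
    and dxy: "\<And>x y. a \<le> x \<Longrightarrow> x \<le> a + r \<Longrightarrow> b \<le> y \<Longrightarrow> y \<le> b + r \<Longrightarrow>
               ((\<lambda>t. gx (x, t)) has_real_derivative gxy (x, y)) (at y)"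
  obtains \<xi> \<eta> where "a < \<xi>" "\<xi> < a + r" "b < \<eta>" "\<eta> < b + r"
    "g (a + r, b + r) - g (a + r, b) - g (a, b + r) + g (a, b) = r * r * gxy (\<xi>, \<eta>)"
proof -
  have "((\<lambda>x. g (x, b + r) - g (x, b)) has_real_derivative gx (x, b + r) - gx (x, b)) (at x)"
    if "a \<le> x" "x \<le> a + r" for x
    using r that by (auto intro!: DERIV_diff dx)
  then obtain \<xi> where \<xi>: "a < \<xi>" "\<xi> < a + r"
    "(g (a + r, b + r) - g (a + r, b)) - (g (a, b + r) - g (a, b)) = r * (gx (\<xi>, b + r) - gx (\<xi>, b))"
    using MVT2[of a "a + r" "\<lambda>x. g (x, b + r) - g (x, b)" "\<lambda>x. gx (x, b + r) - gx (x, b)"] r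
    by auto
  have "((\<lambda>t. gx (\<xi>, t)) has_real_derivative gxy (\<xi>, y)) (at y)" if "b \<le> y" "y \<le> b + r" for y
    using \<xi> that by (auto intro!: dxy)
  then obtain \<eta> where \<eta>: "b < \<eta>" "\<eta> < b + r" "gx (\<xi>, b + r) - gx (\<xi>, b) = r * gxy (\<xi>, \<eta>)"
    using MVT2[of b "b + r" "\<lambda>y. gx (\<xi>, y)" "\<lambda>y. gxy (\<xi>, y)"] r
    by auto
  show thesis
    by (rule that[OF \<xi>(1,2) \<eta>(1,2)]) (use \<xi>(3) \<eta>(3) in \<open>simp add: algebra_simps\<close>)
qed

text \<open>Clairaut: the mean value theorem expresses the second difference
  g(a+r,b+r) - g(a+r,b) - g(a,b+r) + g(a,b) through either mixed partial at points near (a,b).\<close>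

lemma mixed_partials_eq_real:
  fixes g gx gy gxy gyx :: "real \<times> real \<Rightarrow> real"
  assumes U: "open U" and p: "(a, b) \<in> U"
    and dx: "\<And>x y. (x, y) \<in> U \<Longrightarrow> ((\<lambda>s. g (s, y)) has_real_derivative gx (x, y)) (at x)"
    and dy: "\<And>x y. (x, y) \<in> U \<Longrightarrow> ((\<lambda>t. g (x, t)) has_real_derivative gy (x, y)) (at y)"
    and dxy: "\<And>x y. (x, y) \<in> U \<Longrightarrow> ((\<lambda>t. gx (x, t)) has_real_derivative gxy (x, y)) (at y)"
    and dyx: "\<And>x y. (x, y) \<in> U \<Longrightarrow> ((\<lambda>s. gy (s, y)) has_real_derivative gyx (x, y)) (at x)"
    and cxy: "isCont gxy (a, b)" and cyx: "isCont gyx (a, b)"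
  shows "gxy (a, b) = gyx (a, b)"
proof (rule ccontr)
  define c where "c = \<bar>gxy (a, b) - gyx (a, b)\<bar> / 2"
  assume "gxy (a, b) \<noteq> gyx (a, b)"
  then have c: "c > 0" by (simp add: c_def)
  obtain e where e: "e > 0" "ball (a, b) e \<subseteq> U"
    using U p open_contains_ball by blast
  obtain d1 where d1: "d1 > 0" "\<And>q. dist q (a, b) < d1 \<Longrightarrow> dist (gxy q) (gxy (a, b)) < c"
    using cxy c unfolding continuous_at_eps_delta by blast
  obtain d2 where d2: "d2 > 0" "\<And>q. dist q (a, b) < d2 \<Longrightarrow> dist (gyx q) (gyx (a, b)) < c"
    using cyx c unfolding continuous_at_eps_delta by blast
  define r where "r = min (min d1 d2) e / 4"
  have r: "r > 0" using d1 d2 e by (simp add: r_def)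
  have near: "dist (x, y) (a, b) < min (min d1 d2) e" if "a \<le> x" "x \<le> a + r" "b \<le> y" "y \<le> b + r" for x y
  proof -
    have "dist (x, y) (a, b) \<le> \<bar>x - a\<bar> + \<bar>y - b\<bar>"
      by (simp add: dist_Pair_Pair dist_real_def sqrt_sum_squares_le_sum_abs)
    also have "\<dots> < min (min d1 d2) e" using that r unfolding r_def by linarith
    finally show ?thesis .
  qed
  have inU: "(x, y) \<in> U" if "a \<le> x" "x \<le> a + r" "b \<le> y" "y \<le> b + r" for x y
    using near[OF that] e by (auto simp: dist_commute subset_eq)
  obtain \<xi> \<eta> where \<xi>\<eta>: "a < \<xi>" "\<xi> < a + r" "b < \<eta>" "\<eta> < b + r"
    "g (a + r, b + r) - g (a + r, b) - g (a, b + r) + g (a, b) = r * r * gxy (\<xi>, \<eta>)"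
    using second_difference_mvt[of r a b g gx gxy] r inU dx dxy by blast
  obtain \<eta>' \<xi>' where \<eta>'\<xi>': "b < \<eta>'" "\<eta>' < b + r" "a < \<xi>'" "\<xi>' < a + r"
    "g (a + r, b + r) - g (a, b + r) - g (a + r, b) + g (a, b) = r * r * gyx (\<xi>', \<eta>')"
    using second_difference_mvt[of r b a "\<lambda>q. g (snd q, fst q)" "\<lambda>q. gy (snd q, fst q)"
        "\<lambda>q. gyx (snd q, fst q)"] r inU dy dyx
    by simp blast
  have "gxy (\<xi>, \<eta>) = gyx (\<xi>', \<eta>')"
    using \<xi>\<eta>(5) \<eta>'\<xi>'(5) r by (simp add: algebra_simps)
  then have "2 * c \<le> \<bar>gxy (\<xi>, \<eta>) - gxy (a, b)\<bar> + \<bar>gyx (\<xi>', \<eta>') - gyx (a, b)\<bar>"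
    using abs_triangle_ineq4[of "gyx (\<xi>', \<eta>') - gyx (a, b)" "gxy (\<xi>, \<eta>) - gxy (a, b)"]
    by (simp add: c_def)
  moreover have "\<bar>gxy (\<xi>, \<eta>) - gxy (a, b)\<bar> < c"
    using d1(2) near[of \<xi> \<eta>] \<xi>\<eta> by (simp add: dist_real_def)
  moreover have "\<bar>gyx (\<xi>', \<eta>') - gyx (a, b)\<bar> < c"
    using d2(2) near[of \<xi>' \<eta>'] \<eta>'\<xi>' by (simp add: dist_real_def)
  ultimately show False
    by linarith
qed

lemma iter_pd_append: "iter_pd (bs @ [b]) h = iter_pd bs ((if b then pdy else pdx) h)"
  by (induction bs) auto

lemma smooth2_on_pdx: "smooth2_on U h \<Longrightarrow> smooth2_on U (pdx h)"
  and smooth2_on_pdy: "smooth2_on U h \<Longrightarrow> smooth2_on U (pdy h)"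
  unfolding smooth2_on_def using iter_pd_append[of _ False h] iter_pd_append[of _ True h] by metis+

lemma smooth2_on_iter_pd_differentiable: "smooth2_on U h \<Longrightarrow> p \<in> U \<Longrightarrow> pd_differentiable (iter_pd bs h) p"
  and smooth2_on_iter_pd_continuous: "smooth2_on U h \<Longrightarrow> continuous_on U (iter_pd bs h)"
  unfolding smooth2_on_def pd_differentiable_def by blast+

lemma smooth2_on_pd_differentiable: "smooth2_on U h \<Longrightarrow> p \<in> U \<Longrightarrow> pd_differentiable h p"
  and smooth2_on_continuous: "smooth2_on U h \<Longrightarrow> continuous_on U h"
  using smooth2_on_iter_pd_differentiable[of U h p "[]"] smooth2_on_iter_pd_continuous[of U h "[]"] by simp_all

lemma pdx_pdy_commute:
  fixes h :: "real \<times> real \<Rightarrow> 'a::euclidean_space"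
  assumes U: "open U" and h: "smooth2_on U h" and p: "p \<in> U"
  shows "pdy (pdx h) p = pdx (pdy h) p"
proof (rule euclidean_eqI)
  fix i :: 'a
  have i: "bounded_linear (\<lambda>v::'a. v \<bullet> i)"
    by (rule bounded_linear_inner_left)
  have x: "((\<lambda>s. k (s, y) \<bullet> i) has_real_derivative (pdx k (x, y) \<bullet> i)) (at x)"
    and y: "((\<lambda>t. k (x, t) \<bullet> i) has_real_derivative (pdy k (x, y) \<bullet> i)) (at y)"
    if "smooth2_on U k" "(x, y) \<in> U" for k x y
    using has_pd_linear[OF i] smooth2_on_pd_differentiable[OF that]
    unfolding has_real_derivative_iff_has_vector_derivative pd_differentiable_iff has_pdx_def has_pdy_def
    by auto
  have hx: "smooth2_on U (pdx h)" and hy: "smooth2_on U (pdy h)"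
    using h by (rule smooth2_on_pdx, rule smooth2_on_pdy)
  have "isCont (\<lambda>q. pdy (pdx h) q \<bullet> i) p" "isCont (\<lambda>q. pdx (pdy h) q \<bullet> i) p"
    using smooth2_on_continuous[OF smooth2_on_pdy[OF hx]] smooth2_on_continuous[OF smooth2_on_pdx[OF hy]] U p
    by (auto intro!: continuous_intros simp: continuous_on_eq_continuous_at)
  then show "pdy (pdx h) p \<bullet> i = pdx (pdy h) p \<bullet> i"
    using mixed_partials_eq_real[of U "fst p" "snd p" "\<lambda>q. h q \<bullet> i" "\<lambda>q. pdx h q \<bullet> i"
        "\<lambda>q. pdy h q \<bullet> i" "\<lambda>q. pdy (pdx h) q \<bullet> i" "\<lambda>q. pdx (pdy h) q \<bullet> i"]
      U p x[OF h] y[OF h] y[OF hx] x[OF hy]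
    by simp
qed

lemma pd_linear_combination:
  fixes a b :: "real \<times> real \<Rightarrow> 'n::finite cmat"
  assumes "pd_differentiable a p" "pd_differentiable b p"
  shows "pdx (\<lambda>q. cscale c (a q) + cscale d (b q)) p = cscale c (pdx a p) + cscale d (pdx b p)"
    and "pdy (\<lambda>q. cscale c (a q) + cscale d (b q)) p = cscale c (pdy a p) + cscale d (pdy b p)"
    and "pd_differentiable (\<lambda>q. cscale c (a q) + cscale d (b q)) p"
  using pd_add[OF pd_linear(3)[OF bounded_linear_cscale assms(1)] pd_linear(3)[OF bounded_linear_cscale assms(2)]]
    pd_linear[OF bounded_linear_cscale assms(1), of c] pd_linear[OF bounded_linear_cscale assms(2), of d]
  by simp_all

lemma iter_pd_linear_combination:
  fixes a b :: "real \<times> real \<Rightarrow> 'n::finite cmat"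
  assumes U: "open U" and a: "smooth2_on U a" and b: "smooth2_on U b" and q: "q \<in> U"
  shows "iter_pd bs (\<lambda>q. cscale c (a q) + cscale d (b q)) q = cscale c (iter_pd bs a q) + cscale d (iter_pd bs b q)"
  using q
proof (induction bs arbitrary: q)
  case Nil
  then show ?case by simp
next
  case (Cons x bs)
  have "iter_pd (x # bs) (\<lambda>q. cscale c (a q) + cscale d (b q)) q
      = (if x then pdy else pdx) (\<lambda>q. cscale c (iter_pd bs a q) + cscale d (iter_pd bs b q)) q"
    using pd_local(1,2)[OF U Cons.prems Cons.IH] by simp
  also have "\<dots> = cscale c (iter_pd (x # bs) a q) + cscale d (iter_pd (x # bs) b q)"
    using pd_linear_combination(1,2)[OF smooth2_on_iter_pd_differentiable[OF a Cons.prems]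
        smooth2_on_iter_pd_differentiable[OF b Cons.prems]]
    by simp
  finally show ?case .
qed

lemma smooth2_on_linear_combination:
  fixes a b :: "real \<times> real \<Rightarrow> 'n::finite cmat"
  assumes U: "open U" and a: "smooth2_on U a" and b: "smooth2_on U b"
  shows "smooth2_on U (\<lambda>q. cscale c (a q) + cscale d (b q))"
  unfolding smooth2_on_def
proof (intro allI conjI ballI)
  fix bs
  let ?h = "\<lambda>q. cscale c (a q) + cscale d (b q)"
  have eq: "\<And>q. q \<in> U \<Longrightarrow> cscale c (iter_pd bs a q) + cscale d (iter_pd bs b q) = iter_pd bs ?h q"
    using iter_pd_linear_combination[OF U a b] by simp
  have "continuous_on U (\<lambda>q. cscale c (iter_pd bs a q) + cscale d (iter_pd bs b q))"
    using a b by (intro continuous_on_add bounded_linear.continuous_on[OF bounded_linear_cscale]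
        smooth2_on_iter_pd_continuous)
  then show "continuous_on U (iter_pd bs ?h)"
    by (rule continuous_on_eq[OF _ eq])
  fix p assume p: "p \<in> U"
  have "pd_differentiable (iter_pd bs ?h) p"
    by (rule pd_local(3)[OF U p eq pd_linear_combination(3)])
      (use smooth2_on_iter_pd_differentiable a b p in blast)+
  then show "(\<lambda>s. iter_pd bs ?h (s, snd p)) differentiable at (fst p)"
    and "(\<lambda>t. iter_pd bs ?h (fst p, t)) differentiable at (snd p)"
    unfolding pd_differentiable_def by auto
qed

section \<open>Directional derivatives\<close>

text \<open>Both D1 and D2, in either setting, are directional derivatives with complex
  coefficients; all their calculus is developed once for this common form.\<close>

definition pdir :: "complex \<times> complex \<Rightarrow> (real \<times> real \<Rightarrow> 'n::finite cmat) \<Rightarrow> real \<times> real \<Rightarrow> 'n cmat" where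
  "pdir c h p = cscale (fst c) (pdx h p) + cscale (snd c) (pdy h p)"

definition pdir_scalar :: "complex \<times> complex \<Rightarrow> (real \<times> real \<Rightarrow> complex) \<Rightarrow> real \<times> real \<Rightarrow> complex" where
  "pdir_scalar c k p = fst c * pdx k p + snd c * pdy k p"

definition D1_coeffs :: "setting \<Rightarrow> complex \<times> complex" where
  "D1_coeffs s = (case s of Minkowski \<Rightarrow> (1, 0) | Euclidean \<Rightarrow> (1/2, - \<i>/2))"

definition D2_coeffs :: "setting \<Rightarrow> complex \<times> complex" where
  "D2_coeffs s = (case s of Minkowski \<Rightarrow> (0, 1) | Euclidean \<Rightarrow> (1/2, \<i>/2))"

lemma D1_eq_pdir: "D1 s = pdir (D1_coeffs s)"
  and D2_eq_pdir: "D2 s = pdir (D2_coeffs s)"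
  by (auto simp: fun_eq_iff D1_def D2_def pdir_def D1_coeffs_def D2_coeffs_def cscale_def vec_eq_iff
      algebra_simps split: setting.split)

lemma pdir_local:
  assumes "open U" "p \<in> U" "\<And>q. q \<in> U \<Longrightarrow> h q = k q"
  shows "pdir c h p = pdir c k p"
  using pd_local(1,2)[OF assms] by (simp add: pdir_def)

lemma pdir_const: "pdir c (\<lambda>q. A) p = 0"
  by (simp add: pdir_def pd_const)

lemma pdir_linear_combination:
  fixes a b :: "real \<times> real \<Rightarrow> 'n::finite cmat"
  assumes "pd_differentiable a p" "pd_differentiable b p"
  shows "pdir e (\<lambda>q. cscale c (a q) + cscale d (b q)) p = cscale c (pdir e a p) + cscale d (pdir e b p)"
  using pd_linear_combination(1,2)[OF assms]
  by (simp add: pdir_def cscale_def vec_eq_iff algebra_simps)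

lemma pdir_add: "pd_differentiable a p \<Longrightarrow> pd_differentiable b p \<Longrightarrow>
    pdir c (\<lambda>q. a q + b q) p = pdir c a p + pdir c b p"
  and pdir_cscale: "pd_differentiable a p \<Longrightarrow> pdir c (\<lambda>q. cscale z (a q)) p = cscale z (pdir c a p)"
  using pdir_linear_combination[of a p b c 1 1] pdir_linear_combination[of a p a c z 0] by simp_all

lemma pdir_mult:
  "pd_differentiable a p \<Longrightarrow> pd_differentiable b p \<Longrightarrow>
    pdir c (\<lambda>q. a q ** b q) p = pdir c a p ** b p + a p ** pdir c b p"
  and pdir_comm:
  "pd_differentiable a p \<Longrightarrow> pd_differentiable b p \<Longrightarrow>
    pdir c (\<lambda>q. comm (a q) (b q)) p = comm (pdir c a p) (b p) + comm (a p) (pdir c b p)"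
  using pd_bilinear(1,2)[OF bounded_bilinear_matrix_mult, of a p b]
    pd_bilinear(1,2)[OF bounded_bilinear_comm, of a p b]
  by (simp_all add: pdir_def cscale_add_right cscale_mult_left cscale_mult_right comm_add_left
      comm_add_right comm_cscale_left comm_cscale_right matrix_distrib algebra_simps)

lemma pdir_smult:
  "pd_differentiable k p \<Longrightarrow> pd_differentiable a p \<Longrightarrow>
    pdir c (\<lambda>q. cscale (k q) (a q)) p = cscale (pdir_scalar c k p) (a p) + cscale (k p) (pdir c a p)"
  using pd_bilinear(1,2)[OF bounded_bilinear_cscale, of k p a]
  by (simp add: pdir_def pdir_scalar_def cscale_def vec_eq_iff algebra_simps)

lemma pd_differentiable_cscale: "pd_differentiable a p \<Longrightarrow> pd_differentiable (\<lambda>q. cscale z (a q)) p"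
  and pd_differentiable_cadj: "pd_differentiable a p \<Longrightarrow> pd_differentiable (\<lambda>q. cadj (a q)) p"
  and pd_differentiable_mult:
    "pd_differentiable a p \<Longrightarrow> pd_differentiable b p \<Longrightarrow> pd_differentiable (\<lambda>q. a q ** b q) p"
  and pd_differentiable_comm:
    "pd_differentiable a p \<Longrightarrow> pd_differentiable b p \<Longrightarrow> pd_differentiable (\<lambda>q. comm (a q) (b q)) p"
  and pd_differentiable_smult:
    "pd_differentiable k p \<Longrightarrow> pd_differentiable a p \<Longrightarrow> pd_differentiable (\<lambda>q. cscale (k q) (a q)) p"
  for a b :: "real \<times> real \<Rightarrow> 'n::finite cmat"
  by (auto intro: pd_linear(3) pd_bilinear(3) bounded_linear_cscale bounded_linear_cadj
      bounded_bilinear_matrix_mult bounded_bilinear_comm bounded_bilinear_cscale)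

lemma smooth2_on_pdir:
  fixes h :: "real \<times> real \<Rightarrow> 'n::finite cmat"
  assumes "open U" "smooth2_on U h"
  shows "smooth2_on U (pdir c h)"
  using smooth2_on_linear_combination[OF assms(1) smooth2_on_pdx[OF assms(2)] smooth2_on_pdy[OF assms(2)]]
  by (simp add: pdir_def[abs_def])

lemma pdir_commute:
  fixes h :: "real \<times> real \<Rightarrow> 'n::finite cmat"
  assumes U: "open U" and h: "smooth2_on U h" and p: "p \<in> U"
  shows "pdir d (pdir c h) p = pdir c (pdir d h) p"
proof -
  have xy: "pd_differentiable (pdx h) p" "pd_differentiable (pdy h) p"
    using smooth2_on_pd_differentiable[OF smooth2_on_pdx[OF h] p]
      smooth2_on_pd_differentiable[OF smooth2_on_pdy[OF h] p] .
  have "pdir d (pdir c h) p = pdir d (\<lambda>q. cscale (fst c) (pdx h q) + cscale (snd c) (pdy h q)) p"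
    by (simp add: pdir_def[abs_def])
  moreover have "pdir c (pdir d h) p = pdir c (\<lambda>q. cscale (fst d) (pdx h q) + cscale (snd d) (pdy h q)) p"
    by (simp add: pdir_def[abs_def])
  ultimately show ?thesis
    using pdx_pdy_commute[OF U h p] pdir_linear_combination[OF xy]
    by (simp add: pdir_def cscale_def vec_eq_iff algebra_simps)
qed

section \<open>Coefficients of the conformal vector field\<close>

lemma smooth1_on_deriv: "smooth1_on S f \<Longrightarrow> smooth1_on S (deriv f)"
  unfolding smooth1_on_def by (metis funpow_Suc_right o_apply)

lemma smooth1_on_has_derivative: "smooth1_on S f \<Longrightarrow> x \<in> S \<Longrightarrow> (f has_real_derivative deriv f x) (at x)"
  unfolding smooth1_on_def using DERIV_deriv_iff_real_differentiable by (metis funpow_0)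

lemma pd_of_real_fst:
  assumes U: "open U" and f: "smooth1_on (fst ` U) f"
    and k: "\<And>q. q \<in> U \<Longrightarrow> k q = of_real (f (fst q))" and q: "q \<in> U"
  shows "pd_differentiable k q"
    and "pdir_scalar (D1_coeffs Minkowski) k q = of_real (deriv f (fst q))"
    and "pdir_scalar (D2_coeffs Minkowski) k q = 0"
proof -
  have "has_pdx (\<lambda>q. complex_of_real (f (fst q))) q (of_real (deriv f (fst q)))"
    unfolding has_pdx_def
    using has_vector_derivative_of_real[OF smooth1_on_has_derivative[OF f imageI[OF q]]] by simp
  then have x: "has_pdx k q (of_real (deriv f (fst q)))"
    by (rule has_pd_local(1)[OF U q, rotated]) (simp add: k)
  have y: "has_pdy k q 0"
    by (rule has_pd_local(2)[OF U q, where h = "\<lambda>q. complex_of_real (f (fst q))"])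
      (simp_all add: k has_pdy_def)
  show "pd_differentiable k q" "pdir_scalar (D1_coeffs Minkowski) k q = of_real (deriv f (fst q))"
    "pdir_scalar (D2_coeffs Minkowski) k q = 0"
    using pd_differentiableI[OF x y] pdx_eqI[OF x] pdy_eqI[OF y]
    by (simp_all add: pdir_scalar_def D1_coeffs_def D2_coeffs_def)
qed

lemma pd_of_real_snd:
  assumes U: "open U" and f: "smooth1_on (snd ` U) f"
    and k: "\<And>q. q \<in> U \<Longrightarrow> k q = of_real (f (snd q))" and q: "q \<in> U"
  shows "pd_differentiable k q"
    and "pdir_scalar (D1_coeffs Minkowski) k q = 0"
    and "pdir_scalar (D2_coeffs Minkowski) k q = of_real (deriv f (snd q))"
proof -
  have "has_pdy (\<lambda>q. complex_of_real (f (snd q))) q (of_real (deriv f (snd q)))"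
    unfolding has_pdy_def
    using has_vector_derivative_of_real[OF smooth1_on_has_derivative[OF f imageI[OF q]]] by simp
  then have y: "has_pdy k q (of_real (deriv f (snd q)))"
    by (rule has_pd_local(2)[OF U q, rotated]) (simp add: k)
  have x: "has_pdx k q 0"
    by (rule has_pd_local(1)[OF U q, where h = "\<lambda>q. complex_of_real (f (snd q))"])
      (simp_all add: k has_pdx_def)
  show "pd_differentiable k q" "pdir_scalar (D1_coeffs Minkowski) k q = 0"
    "pdir_scalar (D2_coeffs Minkowski) k q = of_real (deriv f (snd q))"
    using pd_differentiableI[OF x y] pdx_eqI[OF x] pdy_eqI[OF y]
    by (simp_all add: pdir_scalar_def D1_coeffs_def D2_coeffs_def)
qed

lemma open_complex_of_plane:
  assumes "open U"
  shows "open {z. (Re z, Im z) \<in> U}"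
proof -
  have "open ((\<lambda>z. (Re z, Im z)) -` U)"
    by (intro continuous_open_vimage assms continuous_intros)+
  then show ?thesis
    by (simp add: vimage_def)
qed

lemma has_pd_holomorphic:
  assumes U: "open U" and f: "f holomorphic_on {z. (Re z, Im z) \<in> U}" and q: "q \<in> U"
  shows "has_pdx (\<lambda>q. f (Complex (fst q) (snd q))) q (deriv f (Complex (fst q) (snd q)))"
    and "has_pdy (\<lambda>q. f (Complex (fst q) (snd q))) q (\<i> * deriv f (Complex (fst q) (snd q)))"
proof -
  let ?z = "Complex (fst q) (snd q)"
  have f': "(f has_field_derivative deriv f ?z) (at ?z)"
    by (rule holomorphic_derivI[OF f open_complex_of_plane[OF U]]) (use q in auto)
  have "((\<lambda>s. of_real s + \<i> * of_real (snd q)) has_vector_derivative 1 + 0) (at (fst q))"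
    by (intro has_vector_derivative_add has_vector_derivative_const)
      (use has_vector_derivative_of_real[OF DERIV_ident] in simp)
  then have "((\<lambda>s. Complex s (snd q)) has_vector_derivative 1) (at (fst q))"
    by (simp add: Complex_eq)
  from field_vector_diff_chain_at[OF this, of f] f'
  show "has_pdx (\<lambda>q. f (Complex (fst q) (snd q))) q (deriv f ?z)"
    by (simp add: has_pdx_def o_def)
  have "((\<lambda>t. of_real (fst q) + \<i> * of_real t) has_vector_derivative 0 + \<i> * 1) (at (snd q))"
    by (intro has_vector_derivative_add has_vector_derivative_const has_vector_derivative_mult_right)
      (use has_vector_derivative_of_real[OF DERIV_ident] in simp)
  then have "((\<lambda>t. Complex (fst q) t) has_vector_derivative \<i>) (at (snd q))"
    by (simp add: Complex_eq)
  from field_vector_diff_chain_at[OF this, of f] f'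
  show "has_pdy (\<lambda>q. f (Complex (fst q) (snd q))) q (\<i> * deriv f ?z)"
    by (simp add: has_pdy_def o_def)
qed

lemma pd_holomorphic:
  assumes U: "open U" and f: "f holomorphic_on {z. (Re z, Im z) \<in> U}"
    and k: "\<And>q. q \<in> U \<Longrightarrow> k q = f (Complex (fst q) (snd q))" and q: "q \<in> U"
  shows "pd_differentiable k q"
    and "pdir_scalar (D1_coeffs Euclidean) k q = deriv f (Complex (fst q) (snd q))"
    and "pdir_scalar (D2_coeffs Euclidean) k q = 0"
proof -
  have x: "has_pdx k q (deriv f (Complex (fst q) (snd q)))"
    by (rule has_pd_local(1)[OF U q, rotated, OF has_pd_holomorphic(1)[OF U f q]]) (simp add: k)
  have y: "has_pdy k q (\<i> * deriv f (Complex (fst q) (snd q)))"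
    by (rule has_pd_local(2)[OF U q, rotated, OF has_pd_holomorphic(2)[OF U f q]]) (simp add: k)
  show "pd_differentiable k q" "pdir_scalar (D1_coeffs Euclidean) k q = deriv f (Complex (fst q) (snd q))"
    "pdir_scalar (D2_coeffs Euclidean) k q = 0"
    using pd_differentiableI[OF x y] pdx_eqI[OF x] pdy_eqI[OF y]
    by (simp_all add: pdir_scalar_def D1_coeffs_def D2_coeffs_def algebra_simps)
qed

lemma pd_antiholomorphic:
  assumes U: "open U" and f: "f holomorphic_on {z. (Re z, Im z) \<in> U}"
    and k: "\<And>q. q \<in> U \<Longrightarrow> k q = cnj (f (Complex (fst q) (snd q)))" and q: "q \<in> U"
  shows "pd_differentiable k q"
    and "pdir_scalar (D1_coeffs Euclidean) k q = 0"
    and "pdir_scalar (D2_coeffs Euclidean) k q = cnj (deriv f (Complex (fst q) (snd q)))"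
proof -
  have x: "has_pdx k q (cnj (deriv f (Complex (fst q) (snd q))))"
    by (rule has_pd_local(1)[OF U q, rotated,
          OF has_pd_linear(1)[OF bounded_linear_cnj has_pd_holomorphic(1)[OF U f q]]]) (simp add: k)
  have y: "has_pdy k q (cnj (\<i> * deriv f (Complex (fst q) (snd q))))"
    by (rule has_pd_local(2)[OF U q, rotated,
          OF has_pd_linear(2)[OF bounded_linear_cnj has_pd_holomorphic(2)[OF U f q]]]) (simp add: k)
  show "pd_differentiable k q" "pdir_scalar (D1_coeffs Euclidean) k q = 0"
    "pdir_scalar (D2_coeffs Euclidean) k q = cnj (deriv f (Complex (fst q) (snd q)))"
    using pd_differentiableI[OF x y] pdx_eqI[OF x] pdy_eqI[OF y]
    by (simp_all add: pdir_scalar_def D1_coeffs_def D2_coeffs_def algebra_simps)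
qed

lemma conformal_coeffs_pd:
  assumes U: "open U" and cc: "conformal_coeffs s U fF gG" and q: "q \<in> U"
  shows "pd_differentiable fF q" (is ?P1) and "pd_differentiable gG q" (is ?P2)
    and "pd_differentiable (pdir_scalar (D1_coeffs s) fF) q" (is ?P3)
    and "pd_differentiable (pdir_scalar (D2_coeffs s) gG) q" (is ?P4)
    and "pdir_scalar (D2_coeffs s) fF q = 0" (is ?P5) and "pdir_scalar (D1_coeffs s) gG q = 0" (is ?P6)
    and "pdir_scalar (D2_coeffs s) (pdir_scalar (D1_coeffs s) fF) q = 0" (is ?P7)
    and "pdir_scalar (D1_coeffs s) (pdir_scalar (D2_coeffs s) gG) q = 0" (is ?P8)
proof -
  have "?P1 \<and> ?P2 \<and> ?P3 \<and> ?P4 \<and> ?P5 \<and> ?P6 \<and> ?P7 \<and> ?P8"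
  proof (cases s)
    case Minkowski
    then obtain f g :: "real \<Rightarrow> real" where f: "smooth1_on (fst ` U) f" and g: "smooth1_on (snd ` U) g"
      and fF: "\<And>p. p \<in> U \<Longrightarrow> fF p = of_real (f (fst p))"
      and gG: "\<And>p. p \<in> U \<Longrightarrow> gG p = of_real (g (snd p))"
      using cc unfolding conformal_coeffs_def by auto
    have F: "\<And>r. r \<in> U \<Longrightarrow> pdir_scalar (D1_coeffs Minkowski) fF r = of_real (deriv f (fst r))"
      and G: "\<And>r. r \<in> U \<Longrightarrow> pdir_scalar (D2_coeffs Minkowski) gG r = of_real (deriv g (snd r))"
      using pd_of_real_fst(2)[OF U f] pd_of_real_snd(3)[OF U g] fF gG by blast+
    show ?thesis
      using pd_of_real_fst[OF U f, of fF q] pd_of_real_snd[OF U g, of gG q] fF gG F G q Minkowski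
        pd_of_real_fst[OF U smooth1_on_deriv[OF f], of "pdir_scalar (D1_coeffs Minkowski) fF" q]
        pd_of_real_snd[OF U smooth1_on_deriv[OF g], of "pdir_scalar (D2_coeffs Minkowski) gG" q]
      by blast
  next
    case Euclidean
    then obtain f where f: "f holomorphic_on {z. (Re z, Im z) \<in> U}"
      and fF: "\<And>p. p \<in> U \<Longrightarrow> fF p = f (Complex (fst p) (snd p))"
      and gG: "\<And>p. p \<in> U \<Longrightarrow> gG p = cnj (f (Complex (fst p) (snd p)))"
      using cc unfolding conformal_coeffs_def by auto
    have f': "deriv f holomorphic_on {z. (Re z, Im z) \<in> U}"
      by (rule holomorphic_deriv[OF f open_complex_of_plane[OF U]])
    have F: "\<And>r. r \<in> U \<Longrightarrow> pdir_scalar (D1_coeffs Euclidean) fF r = deriv f (Complex (fst r) (snd r))"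
      and G: "\<And>r. r \<in> U \<Longrightarrow> pdir_scalar (D2_coeffs Euclidean) gG r = cnj (deriv f (Complex (fst r) (snd r)))"
      using pd_holomorphic(2)[OF U f] pd_antiholomorphic(3)[OF U f] fF gG by blast+
    show ?thesis
      using pd_holomorphic[OF U f, of fF q] pd_antiholomorphic[OF U f, of gG q] fF gG F G q Euclidean
        pd_holomorphic[OF U f', of "pdir_scalar (D1_coeffs Euclidean) fF" q]
        pd_antiholomorphic[OF U f', of "pdir_scalar (D2_coeffs Euclidean) gG" q]
      by blast
  qed
  then show ?P1 ?P2 ?P3 ?P4 ?P5 ?P6 ?P7 ?P8
    by blast+
qed

lemma conformal_coeffs_reality:
  assumes "conformal_coeffs s U fF gG" "q \<in> U"
  shows "s = Minkowski \<Longrightarrow> cnj (fF q) = fF q \<and> cnj (gG q) = gG q"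
    and "s = Euclidean \<Longrightarrow> gG q = cnj (fF q)"
  using assms by (auto simp: conformal_coeffs_def)

section \<open>Solutions of the linear spectral problem\<close>

lemma matrix_right_cancel: "X ** A = 0 \<Longrightarrow> A ** B = mat 1 \<Longrightarrow> X = 0" for X A B :: "'a::semiring_1^'n^'n"
  by (metis matrix_mul_assoc matrix_mul_rid times0_left)

lemma lsp_zero_curvature:
  assumes U: "open U" and r: "r \<in> U" and \<Phi>: "smooth2_on U \<Phi>" and inv: "\<Phi> r ** \<Phi>' = mat 1"
    and u: "pd_differentiable u1 r" "pd_differentiable u2 r"
    and lsp1: "\<And>q. q \<in> U \<Longrightarrow> pdir c \<Phi> q = u1 q ** \<Phi> q"
    and lsp2: "\<And>q. q \<in> U \<Longrightarrow> pdir d \<Phi> q = u2 q ** \<Phi> q"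
  shows "pdir d u1 r - pdir c u2 r + comm (u1 r) (u2 r) = 0"
proof (rule matrix_right_cancel[OF _ inv])
  have \<Phi>r: "pd_differentiable \<Phi> r"
    using smooth2_on_pd_differentiable[OF \<Phi> r] .
  have "pdir d (pdir c \<Phi>) r = pdir d u1 r ** \<Phi> r + u1 r ** (u2 r ** \<Phi> r)"
    using pdir_local[OF U r lsp1] pdir_mult[OF u(1) \<Phi>r] lsp2[OF r] by simp
  moreover have "pdir c (pdir d \<Phi>) r = pdir c u2 r ** \<Phi> r + u2 r ** (u1 r ** \<Phi> r)"
    using pdir_local[OF U r lsp2] pdir_mult[OF u(2) \<Phi>r] lsp1[OF r] by simp
  ultimately have eq: "pdir d u1 r ** \<Phi> r + u1 r ** (u2 r ** \<Phi> r) = pdir c u2 r ** \<Phi> r + u2 r ** (u1 r ** \<Phi> r)"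
    using pdir_commute[OF U \<Phi> r, of d c] by simp
  have "(pdir d u1 r - pdir c u2 r + comm (u1 r) (u2 r)) ** \<Phi> r
      = (pdir d u1 r ** \<Phi> r + u1 r ** (u2 r ** \<Phi> r)) - (pdir c u2 r ** \<Phi> r + u2 r ** (u1 r ** \<Phi> r))"
    by (simp add: comm_def matrix_distrib matrix_mul_assoc algebra_simps)
  then show "(pdir d u1 r - pdir c u2 r + comm (u1 r) (u2 r)) ** \<Phi> r = 0"
    by (simp add: eq)
qed

lemma lsp_adjoint_derivative:
  assumes U: "open U" and r: "r \<in> U" and unitary: "\<And>q. q \<in> U \<Longrightarrow> cadj (\<Phi> q) ** \<Phi> q = mat 1"
    and \<Phi>r: "pd_differentiable \<Phi> r" and lsp: "pdir c \<Phi> r = u ** \<Phi> r"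
  shows "pdir c (\<lambda>q. cadj (\<Phi> q)) r = - (cadj (\<Phi> r) ** u)"
proof -
  let ?X = "pdir c (\<lambda>q. cadj (\<Phi> q)) r"
  have "?X ** \<Phi> r + cadj (\<Phi> r) ** (u ** \<Phi> r) = pdir c (\<lambda>q. cadj (\<Phi> q) ** \<Phi> q) r"
    using pdir_mult[OF pd_differentiable_cadj[OF \<Phi>r] \<Phi>r] lsp by simp
  also have "\<dots> = 0"
    using pdir_local[OF U r unitary] pdir_const by simp
  finally have "(?X + cadj (\<Phi> r) ** u) ** \<Phi> r = 0"
    by (simp add: matrix_distrib matrix_mul_assoc)
  then have "?X + cadj (\<Phi> r) ** u = 0"
    using matrix_right_cancel unitary_right_inverse[OF unitary[OF r]] by blast
  then show ?thesis
    by (simp add: eq_neg_iff_add_eq_0)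
qed

lemma lsp_conj_derivative:
  assumes U: "open U" and r: "r \<in> U" and unitary: "\<And>q. q \<in> U \<Longrightarrow> cadj (\<Phi> q) ** \<Phi> q = mat 1"
    and \<Phi>r: "pd_differentiable \<Phi> r" and Mr: "pd_differentiable M r" and lsp: "pdir c \<Phi> r = u ** \<Phi> r"
  shows "pdir c (\<lambda>q. cadj (\<Phi> q) ** M q ** \<Phi> q) r = cadj (\<Phi> r) ** (pdir c M r + comm (M r) u) ** \<Phi> r"
  using pdir_mult[OF pd_differentiable_mult[OF pd_differentiable_cadj[OF \<Phi>r] Mr] \<Phi>r]
    pdir_mult[OF pd_differentiable_cadj[OF \<Phi>r] Mr] lsp_adjoint_derivative[OF U r unitary \<Phi>r lsp] lsp
  by (simp add: comm_def matrix_distrib matrix_mul_assoc)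

lemma lsp_dressing_derivative:
  assumes \<Phi>r: "pd_differentiable \<Phi> r" and Mr: "pd_differentiable M r" and lsp: "pdir c \<Phi> r = u ** \<Phi> r"
  shows "pdir c (\<lambda>q. M q ** \<Phi> q) r = u ** (M r ** \<Phi> r) + (pdir c M r + comm (M r) u) ** \<Phi> r"
  using pdir_mult[OF Mr \<Phi>r] lsp by (simp add: comm_def matrix_distrib matrix_mul_assoc)

lemma gauge_linearized_zero_curvature:
  assumes U: "open U" and r: "r \<in> U"
    and A1: "\<And>q. q \<in> U \<Longrightarrow> A1 q = pdir c M q + comm (M q) (u1 q)"
    and A2: "\<And>q. q \<in> U \<Longrightarrow> A2 q = pdir d M q + comm (M q) (u2 q)"
    and M: "pd_differentiable M r" "pd_differentiable (pdir c M) r" "pd_differentiable (pdir d M) r"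
    and u: "pd_differentiable u1 r" "pd_differentiable u2 r"
    and zc: "pdir d u1 r - pdir c u2 r + comm (u1 r) (u2 r) = 0"
    and sym: "pdir d (pdir c M) r = pdir c (pdir d M) r"
  shows "pdir d A1 r - pdir c A2 r + comm (A1 r) (u2 r) + comm (u1 r) (A2 r) = 0"
proof -
  have "pdir d A1 r = pdir c (pdir d M) r + (comm (pdir d M r) (u1 r) + comm (M r) (pdir d u1 r))"
    using pdir_local[OF U r A1] pdir_add[OF M(2) pd_differentiable_comm[OF M(1) u(1)]]
      pdir_comm[OF M(1) u(1)] sym by simp
  moreover have "pdir c A2 r = pdir c (pdir d M) r + (comm (pdir c M r) (u2 r) + comm (M r) (pdir c u2 r))"
    using pdir_local[OF U r A2] pdir_add[OF M(3) pd_differentiable_comm[OF M(1) u(2)]]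
      pdir_comm[OF M(1) u(2)] by simp
  moreover have "pdir c u2 r = pdir d u1 r + comm (u1 r) (u2 r)"
    using zc by (simp add: algebra_simps eq_neg_iff_add_eq_0 flip: diff_eq_eq)
  ultimately show ?thesis
    using A1[OF r] A2[OF r]
    by (simp add: comm_def matrix_distrib matrix_mul_assoc)
qed

section \<open>The conformal symmetry\<close>

text \<open>The E-L equations are not assumed: their zero-curvature form is recovered from the
  existence of the unitary solution \<Phi> of the LSP.\<close>

locale conformal_lsp =
  fixes s :: setting and U :: "(real \<times> real) set" and lam :: complex
    and \<theta> \<Phi> :: "real \<times> real \<Rightarrow> 'n::finite cmat" and fF gG :: "real \<times> real \<Rightarrow> complex"
  assumes open_U: "open U"
    and smooth_\<theta>: "smooth2_on U \<theta>" and smooth_\<Phi>: "smooth2_on U \<Phi>"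
    and unitary_\<Phi>: "\<And>p. p \<in> U \<Longrightarrow> cadj (\<Phi> p) ** \<Phi> p = mat 1"
    and lsp1: "\<And>p. p \<in> U \<Longrightarrow> D1 s \<Phi> p = lax_u1 s lam \<theta> p ** \<Phi> p"
    and lsp2: "\<And>p. p \<in> U \<Longrightarrow> D2 s \<Phi> p = lax_u2 s lam \<theta> p ** \<Phi> p"
    and reality: "\<And>p. p \<in> U \<Longrightarrow> setting_reality s (lax_u1 s lam \<theta> p) (lax_u2 s lam \<theta> p)"
    and conformal: "conformal_coeffs s U fF gG"
begin

abbreviation \<theta>\<^sub>1 :: "real \<times> real \<Rightarrow> 'n cmat" where "\<theta>\<^sub>1 \<equiv> D1 s \<theta>"
abbreviation \<theta>\<^sub>2 :: "real \<times> real \<Rightarrow> 'n cmat" where "\<theta>\<^sub>2 \<equiv> D2 s \<theta>"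
abbreviation u1 :: "real \<times> real \<Rightarrow> 'n cmat" where "u1 \<equiv> lax_u1 s lam \<theta>"
abbreviation u2 :: "real \<times> real \<Rightarrow> 'n cmat" where "u2 \<equiv> lax_u2 s lam \<theta>"
abbreviation M :: "real \<times> real \<Rightarrow> 'n cmat" where "M \<equiv> \<lambda>p. cscale (fF p) (u1 p) + cscale (gG p) (u2 p)"
abbreviation f' :: "real \<times> real \<Rightarrow> complex" where "f' \<equiv> pdir_scalar (D1_coeffs s) fF"
abbreviation g' :: "real \<times> real \<Rightarrow> complex" where "g' \<equiv> pdir_scalar (D2_coeffs s) gG"

lemmas D_eq_pdir = D1_eq_pdir D2_eq_pdir

lemma smooth_\<theta>_derivatives: "smooth2_on U \<theta>\<^sub>1" "smooth2_on U \<theta>\<^sub>2"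
  by (simp_all add: D_eq_pdir smooth2_on_pdir open_U smooth_\<theta>)

lemma pd_differentiable_\<theta>_derivatives:
  assumes "r \<in> U"
  shows "pd_differentiable \<theta> r" "pd_differentiable \<theta>\<^sub>1 r" "pd_differentiable \<theta>\<^sub>2 r"
    "pd_differentiable (D1 s \<theta>\<^sub>1) r" "pd_differentiable (D2 s \<theta>\<^sub>1) r"
    "pd_differentiable (D1 s \<theta>\<^sub>2) r" "pd_differentiable (D2 s \<theta>\<^sub>2) r"
  unfolding D_eq_pdir
  by (intro smooth2_on_pd_differentiable[OF _ assms] smooth2_on_pdir open_U smooth_\<theta>)+

lemma D_local:
  assumes "r \<in> U" "\<And>q. q \<in> U \<Longrightarrow> h q = k q"
  shows "D1 s h r = D1 s k r" "D2 s h r = D2 s k r"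
    and "pd_differentiable h r \<Longrightarrow> pd_differentiable k r"
  using pdir_local[OF open_U assms] pd_local(3)[OF open_U assms] by (simp_all add: D_eq_pdir)

lemma \<theta>_mixed_derivatives:
  assumes "r \<in> U"
  shows "D2 s \<theta>\<^sub>1 r = D1 s \<theta>\<^sub>2 r"
    and "D2 s (D1 s \<theta>\<^sub>1) r = D1 s (D2 s \<theta>\<^sub>1) r" "D2 s (D1 s \<theta>\<^sub>2) r = D1 s (D2 s \<theta>\<^sub>2) r"
    and "D2 s (D2 s \<theta>\<^sub>1) r = D1 s (D2 s \<theta>\<^sub>2) r"
proof -
  have mixed: "D2 s \<theta>\<^sub>1 q = D1 s \<theta>\<^sub>2 q" if "q \<in> U" for q
    using pdir_commute[OF open_U smooth_\<theta> that] by (simp add: D_eq_pdir)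
  show "D2 s \<theta>\<^sub>1 r = D1 s \<theta>\<^sub>2 r"
    using mixed[OF assms] .
  show "D2 s (D1 s \<theta>\<^sub>1) r = D1 s (D2 s \<theta>\<^sub>1) r" "D2 s (D1 s \<theta>\<^sub>2) r = D1 s (D2 s \<theta>\<^sub>2) r"
    using pdir_commute[OF open_U _ assms] smooth_\<theta>_derivatives by (simp_all add: D_eq_pdir)
  then show "D2 s (D2 s \<theta>\<^sub>1) r = D1 s (D2 s \<theta>\<^sub>2) r"
    using D_local(2)[OF assms mixed] by simp
qed

lemma u1_eq: "u1 = (\<lambda>q. cscale (-2 / (1 + lam)) (comm (\<theta>\<^sub>1 q) (\<theta> q)))"
  and u2_eq: "u2 = (\<lambda>q. cscale (-2 / (1 - lam)) (comm (\<theta>\<^sub>2 q) (\<theta> q)))"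
  by (simp_all add: fun_eq_iff lax_u1_def lax_u2_def)

lemma D_u:
  assumes "r \<in> U"
  shows "D1 s u1 r = cscale (-2 / (1 + lam)) (comm (D1 s \<theta>\<^sub>1 r) (\<theta> r))"
    and "D2 s u1 r = cscale (-2 / (1 + lam)) (comm (D2 s \<theta>\<^sub>1 r) (\<theta> r) + comm (\<theta>\<^sub>1 r) (\<theta>\<^sub>2 r))"
    and "D1 s u2 r = cscale (-2 / (1 - lam)) (comm (D2 s \<theta>\<^sub>1 r) (\<theta> r) + comm (\<theta>\<^sub>2 r) (\<theta>\<^sub>1 r))"
    and "D2 s u2 r = cscale (-2 / (1 - lam)) (comm (D2 s \<theta>\<^sub>2 r) (\<theta> r))"
  using pd_differentiable_\<theta>_derivatives[OF assms] \<theta>_mixed_derivatives(1)[OF assms]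
  unfolding u1_eq u2_eq
  by (simp_all add: D_eq_pdir pdir_cscale pdir_comm pd_differentiable_comm)

lemma pd_differentiable_u:
  assumes r: "r \<in> U"
  shows "pd_differentiable u1 r" "pd_differentiable u2 r"
    "pd_differentiable (D1 s u1) r" "pd_differentiable (D2 s u1) r"
    "pd_differentiable (D1 s u2) r" "pd_differentiable (D2 s u2) r"
proof -
  note \<theta> = pd_differentiable_\<theta>_derivatives[OF r]
  show "pd_differentiable u1 r" "pd_differentiable u2 r"
    unfolding u1_eq u2_eq using \<theta> by (intro pd_differentiable_cscale pd_differentiable_comm; simp)+
  show "pd_differentiable (D1 s u1) r"
    by (rule D_local(3)[OF r, rotated, where h = "\<lambda>q. cscale (-2 / (1 + lam)) (comm (D1 s \<theta>\<^sub>1 q) (\<theta> q))"])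
      (use \<theta> D_u in \<open>auto intro: pd_differentiable_cscale pd_differentiable_comm\<close>)
  show "pd_differentiable (D2 s u1) r"
    by (rule D_local(3)[OF r, rotated, where h = "\<lambda>q. cscale (-2 / (1 + lam))
        (comm (D2 s \<theta>\<^sub>1 q) (\<theta> q) + comm (\<theta>\<^sub>1 q) (\<theta>\<^sub>2 q))"])
      (use \<theta> D_u in \<open>auto intro!: pd_differentiable_cscale pd_differentiable_comm pd_add(3)\<close>)
  show "pd_differentiable (D1 s u2) r"
    by (rule D_local(3)[OF r, rotated, where h = "\<lambda>q. cscale (-2 / (1 - lam))
        (comm (D2 s \<theta>\<^sub>1 q) (\<theta> q) + comm (\<theta>\<^sub>2 q) (\<theta>\<^sub>1 q))"])
      (use \<theta> D_u in \<open>auto intro!: pd_differentiable_cscale pd_differentiable_comm pd_add(3)\<close>)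
  show "pd_differentiable (D2 s u2) r"
    by (rule D_local(3)[OF r, rotated, where h = "\<lambda>q. cscale (-2 / (1 - lam)) (comm (D2 s \<theta>\<^sub>2 q) (\<theta> q))"])
      (use \<theta> D_u in \<open>auto intro: pd_differentiable_cscale pd_differentiable_comm\<close>)
qed

lemma u_mixed_derivatives:
  assumes r: "r \<in> U"
  shows "D2 s (D1 s u1) r = D1 s (D2 s u1) r" "D2 s (D1 s u2) r = D1 s (D2 s u2) r"
proof -
  note \<theta> = pd_differentiable_\<theta>_derivatives[OF r] and mixed = \<theta>_mixed_derivatives[OF r]
  have "D2 s (D1 s u1) r = D2 s (\<lambda>q. cscale (-2 / (1 + lam)) (comm (D1 s \<theta>\<^sub>1 q) (\<theta> q))) r"
    by (rule D_local[OF r]) (simp add: D_u)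
  also have "\<dots> = cscale (-2 / (1 + lam)) (comm (D2 s (D1 s \<theta>\<^sub>1) r) (\<theta> r) + comm (D1 s \<theta>\<^sub>1 r) (\<theta>\<^sub>2 r))"
    using \<theta> by (simp add: D_eq_pdir pdir_cscale pdir_comm pd_differentiable_comm)
  also have "\<dots> = D1 s (\<lambda>q. cscale (-2 / (1 + lam)) (comm (D2 s \<theta>\<^sub>1 q) (\<theta> q) + comm (\<theta>\<^sub>1 q) (\<theta>\<^sub>2 q))) r"
    using \<theta> mixed comm_swap[of "\<theta>\<^sub>1 r" "D2 s \<theta>\<^sub>1 r"]
    by (simp add: D_eq_pdir pdir_cscale pdir_comm pdir_add pd_differentiable_comm pd_add(3) algebra_simps)
  also have "\<dots> = D1 s (D2 s u1) r"
    by (rule D_local[OF r]) (simp add: D_u)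
  finally show "D2 s (D1 s u1) r = D1 s (D2 s u1) r" .
  have "D2 s (D1 s u2) r = D2 s (\<lambda>q. cscale (-2 / (1 - lam)) (comm (D2 s \<theta>\<^sub>1 q) (\<theta> q) + comm (\<theta>\<^sub>2 q) (\<theta>\<^sub>1 q))) r"
    by (rule D_local[OF r]) (simp add: D_u)
  also have "\<dots> = cscale (-2 / (1 - lam)) (comm (D1 s (D2 s \<theta>\<^sub>2) r) (\<theta> r) + comm (D2 s \<theta>\<^sub>2 r) (\<theta>\<^sub>1 r))"
    using \<theta> mixed comm_swap[of "\<theta>\<^sub>2 r" "D2 s \<theta>\<^sub>1 r"]
    by (simp add: D_eq_pdir pdir_cscale pdir_comm pdir_add pd_differentiable_comm pd_add(3) algebra_simps)
  also have "\<dots> = D1 s (\<lambda>q. cscale (-2 / (1 - lam)) (comm (D2 s \<theta>\<^sub>2 q) (\<theta> q))) r"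
    using \<theta> by (simp add: D_eq_pdir pdir_cscale pdir_comm pd_differentiable_comm)
  also have "\<dots> = D1 s (D2 s u2) r"
    by (rule D_local[OF r]) (simp add: D_u)
  finally show "D2 s (D1 s u2) r = D1 s (D2 s u2) r" .
qed

lemma zero_curvature:
  assumes r: "r \<in> U"
  shows "D2 s u1 r - D1 s u2 r + comm (u1 r) (u2 r) = 0"
  unfolding D_eq_pdir
  by (rule lsp_zero_curvature[OF open_U r smooth_\<Phi>, where \<Phi>' = "cadj (\<Phi> r)"])
    (use unitary_right_inverse[OF unitary_\<Phi>[OF r]] pd_differentiable_u[OF r] lsp1 lsp2
      in \<open>simp_all add: D_eq_pdir\<close>)

lemmas coeffs = conformal_coeffs_pd[OF open_U conformal]

lemma D_M:
  assumes r: "r \<in> U"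
  shows "D1 s M r = cscale (f' r) (u1 r) + cscale (fF r) (D1 s u1 r) + cscale (gG r) (D1 s u2 r)"
    and "D2 s M r = cscale (fF r) (D2 s u1 r) + cscale (g' r) (u2 r) + cscale (gG r) (D2 s u2 r)"
  using pd_differentiable_u[OF r] coeffs[OF r]
  by (simp_all add: D_eq_pdir pdir_add pdir_smult pd_differentiable_smult add.assoc)

lemma pd_differentiable_M:
  assumes r: "r \<in> U"
  shows "pd_differentiable M r" "pd_differentiable (D1 s M) r" "pd_differentiable (D2 s M) r"
proof -
  note u = pd_differentiable_u[OF r] and c = coeffs[OF r]
  show "pd_differentiable M r"
    using u c by (intro pd_add(3) pd_differentiable_smult)
  show "pd_differentiable (D1 s M) r"
    by (rule D_local(3)[OF r, rotated, where h = "\<lambda>q. cscale (f' q) (u1 q) + cscale (fF q) (D1 s u1 q)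
        + cscale (gG q) (D1 s u2 q)"]) (use u c D_M in \<open>auto intro!: pd_add(3) pd_differentiable_smult\<close>)
  show "pd_differentiable (D2 s M) r"
    by (rule D_local(3)[OF r, rotated, where h = "\<lambda>q. cscale (fF q) (D2 s u1 q) + cscale (g' q) (u2 q)
        + cscale (gG q) (D2 s u2 q)"]) (use u c D_M in \<open>auto intro!: pd_add(3) pd_differentiable_smult\<close>)
qed

lemma M_mixed_derivatives:
  assumes r: "r \<in> U"
  shows "D2 s (D1 s M) r = D1 s (D2 s M) r"
proof -
  note u = pd_differentiable_u[OF r] and c = coeffs[OF r]
  have "D2 s (D1 s M) r = D2 s (\<lambda>q. cscale (f' q) (u1 q) + cscale (fF q) (D1 s u1 q) + cscale (gG q) (D1 s u2 q)) r"
    by (rule D_local[OF r]) (simp add: D_M)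
  also have "\<dots> = cscale (f' r) (D2 s u1 r) + cscale (fF r) (D2 s (D1 s u1) r)
      + cscale (g' r) (D1 s u2 r) + cscale (gG r) (D2 s (D1 s u2) r)"
    using u c by (simp add: D_eq_pdir pdir_add pdir_smult pd_differentiable_smult pd_add(3) algebra_simps)
  also have "\<dots> = D1 s (\<lambda>q. cscale (fF q) (D2 s u1 q) + cscale (g' q) (u2 q) + cscale (gG q) (D2 s u2 q)) r"
    using u c u_mixed_derivatives[OF r]
    by (simp add: D_eq_pdir pdir_add pdir_smult pd_differentiable_smult pd_add(3) algebra_simps)
  also have "\<dots> = D1 s (D2 s M) r"
    by (rule D_local[OF r]) (simp add: D_M)
  finally show ?thesis .
qed

lemma charQ_eq: "charQ s fF gG \<theta> = (\<lambda>q. cscale (fF q) (\<theta>\<^sub>1 q) + cscale (gG q) (\<theta>\<^sub>2 q))"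
  by (simp add: fun_eq_iff charQ_def)

lemma prw_u_eq:
  assumes r: "r \<in> U"
  shows "prw_u1 s lam fF gG \<theta> r = cscale (f' r) (u1 r) + cscale (fF r) (D1 s u1 r) + cscale (gG r) (D2 s u1 r)"
    and "prw_u2 s lam fF gG \<theta> r = cscale (fF r) (D1 s u2 r) + cscale (g' r) (u2 r) + cscale (gG r) (D2 s u2 r)"
proof -
  note \<theta> = pd_differentiable_\<theta>_derivatives[OF r] and c = coeffs[OF r]
  have "D1 s (charQ s fF gG \<theta>) r = cscale (f' r) (\<theta>\<^sub>1 r) + cscale (fF r) (D1 s \<theta>\<^sub>1 r) + cscale (gG r) (D2 s \<theta>\<^sub>1 r)"
    and "D2 s (charQ s fF gG \<theta>) r = cscale (fF r) (D2 s \<theta>\<^sub>1 r) + cscale (g' r) (\<theta>\<^sub>2 r) + cscale (gG r) (D2 s \<theta>\<^sub>2 r)"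
    using \<theta> c \<theta>_mixed_derivatives(1)[OF r] unfolding charQ_eq
    by (simp_all add: D_eq_pdir pdir_add pdir_smult pd_differentiable_smult add.assoc)
  then show "prw_u1 s lam fF gG \<theta> r = cscale (f' r) (u1 r) + cscale (fF r) (D1 s u1 r) + cscale (gG r) (D2 s u1 r)"
    and "prw_u2 s lam fF gG \<theta> r = cscale (fF r) (D1 s u2 r) + cscale (g' r) (u2 r) + cscale (gG r) (D2 s u2 r)"
    using D_u[OF r]
    by (simp_all add: prw_u1_def prw_u2_def charQ_def lax_u1_def lax_u2_def comm_add_left comm_add_right
        comm_cscale_left comm_cscale_right cscale_add_right cscale_cscale algebra_simps)
qed

lemma prw_u_gauge:
  assumes r: "r \<in> U"
  shows "prw_u1 s lam fF gG \<theta> r = D1 s M r + comm (M r) (u1 r)"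
    and "prw_u2 s lam fF gG \<theta> r = D2 s M r + comm (M r) (u2 r)"
proof -
  have zc: "D1 s u2 r = D2 s u1 r + comm (u1 r) (u2 r)"
    using zero_curvature[OF r] by (simp add: algebra_simps eq_neg_iff_add_eq_0 flip: diff_eq_eq)
  show "prw_u1 s lam fF gG \<theta> r = D1 s M r + comm (M r) (u1 r)"
    and "prw_u2 s lam fF gG \<theta> r = D2 s M r + comm (M r) (u2 r)"
    unfolding prw_u_eq[OF r] D_M[OF r] zc
    by (simp_all add: comm_add_left comm_add_right comm_cscale_left cscale_add_right comm_swap[of "u2 r"]
        cscale_minus_right)
qed

lemma M_in_su:
  assumes r: "r \<in> U"
  shows "in_su (M r)"
proof -
  have "trace (M r) = 0"
    by (simp add: u1_eq u2_eq trace_add trace_cscale trace_comm)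
  moreover have "cadj (M r) = - M r"
  proof (cases s)
    case Minkowski
    then show ?thesis
      using reality[OF r] conformal_coeffs_reality(1)[OF conformal r]
      by (simp add: setting_reality_def in_su_def cadj_add cadj_cscale cscale_minus_right)
  next
    case Euclidean
    then have "cadj (u1 r) = - u2 r"
      using reality[OF r] by (simp add: setting_reality_def)
    moreover from this have "cadj (u2 r) = - u1 r"
      by (metis cadj_cadj cadj_minus minus_minus)
    ultimately show ?thesis
      using conformal_coeffs_reality(2)[OF conformal r] Euclidean
      by (simp add: cadj_add cadj_cscale cscale_minus_right)
  qed
  ultimately show ?thesis
    by (simp add: in_su_def)
qed

lemma immersion_tangent:
  assumes r: "r \<in> U"
  shows "D1 s (\<lambda>p. matrix_inv (\<Phi> p) ** M p ** \<Phi> p) r = matrix_inv (\<Phi> r) ** prw_u1 s lam fF gG \<theta> r ** \<Phi> r"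
    and "D2 s (\<lambda>p. matrix_inv (\<Phi> p) ** M p ** \<Phi> p) r = matrix_inv (\<Phi> r) ** prw_u2 s lam fF gG \<theta> r ** \<Phi> r"
proof -
  have inv: "\<And>q. q \<in> U \<Longrightarrow> matrix_inv (\<Phi> q) = cadj (\<Phi> q)"
    using matrix_inv_unitary[OF unitary_\<Phi>] .
  note lsp_conj = lsp_conj_derivative[OF open_U r unitary_\<Phi> smooth2_on_pd_differentiable[OF smooth_\<Phi> r]
      pd_differentiable_M(1)[OF r]]
  show "D1 s (\<lambda>p. matrix_inv (\<Phi> p) ** M p ** \<Phi> p) r = matrix_inv (\<Phi> r) ** prw_u1 s lam fF gG \<theta> r ** \<Phi> r"
    using D_local(1)[OF r, of "\<lambda>p. matrix_inv (\<Phi> p) ** M p ** \<Phi> p"] inv lsp_conj lsp1[OF r]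
    by (simp add: D_eq_pdir prw_u_gauge[OF r] inv[OF r])
  show "D2 s (\<lambda>p. matrix_inv (\<Phi> p) ** M p ** \<Phi> p) r = matrix_inv (\<Phi> r) ** prw_u2 s lam fF gG \<theta> r ** \<Phi> r"
    using D_local(2)[OF r, of "\<lambda>p. matrix_inv (\<Phi> p) ** M p ** \<Phi> p"] inv lsp_conj lsp2[OF r]
    by (simp add: D_eq_pdir prw_u_gauge[OF r] inv[OF r])
qed

lemma immersion_in_su: "r \<in> U \<Longrightarrow> in_su (matrix_inv (\<Phi> r) ** M r ** \<Phi> r)"
  using in_su_unitary_conj[OF unitary_\<Phi> M_in_su] matrix_inv_unitary[OF unitary_\<Phi>] by simp

lemma dressing_eq_immersion: "r \<in> U \<Longrightarrow> M r ** \<Phi> r = \<Phi> r ** (matrix_inv (\<Phi> r) ** M r ** \<Phi> r)"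
  using matrix_inv_unitary[OF unitary_\<Phi>] unitary_right_inverse[OF unitary_\<Phi>]
  by (simp add: matrix_mul_assoc)

lemma lsp_symmetry:
  "LSP_symmetry s U u1 u2 \<Phi> (prw_u1 s lam fF gG \<theta>) (prw_u2 s lam fF gG \<theta>) (\<lambda>p. M p ** \<Phi> p)"
  unfolding LSP_symmetry_def
proof (intro ballI conjI)
  fix r assume r: "r \<in> U"
  note \<Phi>r = smooth2_on_pd_differentiable[OF smooth_\<Phi> r] and M = pd_differentiable_M[OF r]
  show "D2 s (prw_u1 s lam fF gG \<theta>) r - D1 s (prw_u2 s lam fF gG \<theta>) r
      + comm (prw_u1 s lam fF gG \<theta> r) (u2 r) + comm (u1 r) (prw_u2 s lam fF gG \<theta> r) = 0"
    unfolding D_eq_pdir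
    by (rule gauge_linearized_zero_curvature[OF open_U r, where M = M])
      (use prw_u_gauge M pd_differentiable_u[OF r] zero_curvature[OF r] M_mixed_derivatives[OF r]
        in \<open>simp_all add: D_eq_pdir\<close>)
  show "in_su (matrix_inv (\<Phi> r) ** (M r ** \<Phi> r))"
    using immersion_in_su[OF r] by (simp add: matrix_mul_assoc)
  show "D1 s (\<lambda>p. M p ** \<Phi> p) r = u1 r ** (M r ** \<Phi> r) + prw_u1 s lam fF gG \<theta> r ** \<Phi> r"
    using lsp_dressing_derivative[OF \<Phi>r M(1)] lsp1[OF r] by (simp add: D_eq_pdir prw_u_gauge[OF r])
  show "D2 s (\<lambda>p. M p ** \<Phi> p) r = u2 r ** (M r ** \<Phi> r) + prw_u2 s lam fF gG \<theta> r ** \<Phi> r"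
    using lsp_dressing_derivative[OF \<Phi>r M(1)] lsp2[OF r] by (simp add: D_eq_pdir prw_u_gauge[OF r])
qed

end

theorem proposition4:
  fixes s :: setting and U :: "(real \<times> real) set" and lam :: complex
    and \<theta> \<Phi> :: "real \<times> real \<Rightarrow> complex^'n::finite^'n" and fF gG :: "real \<times> real \<Rightarrow> complex"
  assumes "open U"
    and "lam \<noteq> 1" and "lam \<noteq> -1"
    and "smooth2_on U \<theta>" and "smooth2_on U \<Phi>"
    and "\<forall>p\<in>U. in_su (\<theta> p)"
    and "\<forall>p\<in>U. rank_one_herm_proj (mat (1 / of_nat CARD('n)) - cscale \<i> (\<theta> p))"
    and "\<forall>p\<in>U. comm (D2 s (D1 s \<theta>) p) (\<theta> p) = 0"
    and "\<forall>p\<in>U. in_SU (\<Phi> p)"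
    and "\<forall>p\<in>U. D1 s \<Phi> p = lax_u1 s lam \<theta> p ** \<Phi> p \<and> D2 s \<Phi> p = lax_u2 s lam \<theta> p ** \<Phi> p"
    and "\<forall>p\<in>U. setting_reality s (lax_u1 s lam \<theta> p) (lax_u2 s lam \<theta> p)"
    and "conformal_coeffs s U fF gG"
  shows "let u1 = lax_u1 s lam \<theta>; u2 = lax_u2 s lam \<theta>;
             A1 = prw_u1 s lam fF gG \<theta>; A2 = prw_u2 s lam fF gG \<theta>;
             F = (\<lambda>p. matrix_inv (\<Phi> p) ** (cscale (fF p) (u1 p) + cscale (gG p) (u2 p)) ** \<Phi> p);
             \<Psi> = (\<lambda>p. (cscale (fF p) (u1 p) + cscale (gG p) (u2 p)) ** \<Phi> p)
         in (\<forall>p\<in>U. in_su (F p)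
                 \<and> D1 s F p = matrix_inv (\<Phi> p) ** A1 p ** \<Phi> p
                 \<and> D2 s F p = matrix_inv (\<Phi> p) ** A2 p ** \<Phi> p
                 \<and> \<Psi> p = \<Phi> p ** F p)
            \<and> LSP_symmetry s U u1 u2 \<Phi> A1 A2 \<Psi>"
proof -
  interpret conformal_lsp s U lam \<theta> \<Phi> fF gG
    using assms by unfold_locales (auto simp: in_SU_def)
  show ?thesis
    unfolding Let_def
    using immersion_in_su immersion_tangent dressing_eq_immersion lsp_symmetry by blast
qed

end
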